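(* Let $G$ be a graph with a min-max clique covering $\{C_1,\dots,C_\ell\}$ that has simple intersection, let $\mathcal{C}(G)$ be the compressed cliques graph constructed from it, and let $\phi:V(G)\to V(\mathcal{C}(G))$ be given by $\phi(v)=v_{i,j}$ if $v\in C_i\cap C_j$ ($i\ne j$) and $\phi(v)=v_{i,i}$ if $v$ lies in $C_i$ and in no other clique of the covering. If $C$ is a clique in $\mathcal{C}(G)$, then $\phi^{-1}(C)$ is a clique in $G$.
   Context: A clique covering of a graph is a set of cliques such that every edge lies in at least one of them; $\operatorname{cc}(G)$ is its minimum size. A min-max clique covering is a clique covering of size $\operatorname{cc}(G)$ consisting of maximal cliques; it has simple intersection if no three distinct cliques of it share a vertex. Put $C_{i,j}=C_i\cap C_j$ ($i\ne j$) and $C_{i,i}=C_i\setminus\bigcup_{j\ne i}C_j$; the compressed cliques graph $\mathcal{C}(G)$ has a vertex $v_{i,j}$ for each non-empty $C_{i,j}$ (including $i=j$), with $v_{i,j}\sim v_{i',j'}$ iff $\{i,j\}\cap\{i',j'\}\ne\emptyset$. *)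

theory Defs
  imports Main
begin

definition graph :: "'a set \<Rightarrow> ('a \<Rightarrow> 'a \<Rightarrow> bool) \<Rightarrow> bool" where
  "graph V E \<longleftrightarrow> finite V \<and> (\<forall>x y. E x y \<longrightarrow> x \<in> V \<and> y \<in> V)
     \<and> (\<forall>x y. E x y \<longrightarrow> E y x) \<and> (\<forall>x. \<not> E x x)"

definition clique :: "'a set \<Rightarrow> ('a \<Rightarrow> 'a \<Rightarrow> bool) \<Rightarrow> 'a set \<Rightarrow> bool" where
  "clique V E K \<longleftrightarrow> K \<subseteq> V \<and> (\<forall>x\<in>K. \<forall>y\<in>K. x \<noteq> y \<longrightarrow> E x y)"

definition maximal_clique :: "'a set \<Rightarrow> ('a \<Rightarrow> 'a \<Rightarrow> bool) \<Rightarrow> 'a set \<Rightarrow> bool" where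
  "maximal_clique V E K \<longleftrightarrow> clique V E K \<and> (\<forall>K'. clique V E K' \<and> K \<subseteq> K' \<longrightarrow> K' = K)"

definition clique_covering :: "'a set \<Rightarrow> ('a \<Rightarrow> 'a \<Rightarrow> bool) \<Rightarrow> 'a set set \<Rightarrow> bool" where
  "clique_covering V E \<C> \<longleftrightarrow> (\<forall>K\<in>\<C>. clique V E K)
     \<and> (\<forall>x\<in>V. \<forall>y\<in>V. E x y \<longrightarrow> (\<exists>K\<in>\<C>. x \<in> K \<and> y \<in> K))"

definition cc :: "'a set \<Rightarrow> ('a \<Rightarrow> 'a \<Rightarrow> bool) \<Rightarrow> nat" where
  "cc V E = (LEAST n. \<exists>\<C>. finite \<C> \<and> clique_covering V E \<C> \<and> card \<C> = n)"

definition min_max_clique_covering ::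
    "'a set \<Rightarrow> ('a \<Rightarrow> 'a \<Rightarrow> bool) \<Rightarrow> (nat \<Rightarrow> 'a set) \<Rightarrow> nat \<Rightarrow> bool" where
  "min_max_clique_covering V E C l \<longleftrightarrow> inj_on C {..<l}
     \<and> clique_covering V E (C ` {..<l}) \<and> l = cc V E
     \<and> (\<forall>i<l. maximal_clique V E (C i))"

definition simple_intersection :: "(nat \<Rightarrow> 'a set) \<Rightarrow> nat \<Rightarrow> bool" where
  "simple_intersection C l \<longleftrightarrow>
     (\<forall>i<l. \<forall>j<l. \<forall>k<l. i \<noteq> j \<and> j \<noteq> k \<and> i \<noteq> k \<longrightarrow> C i \<inter> C j \<inter> C k = {})"

definition Cpart :: "(nat \<Rightarrow> 'a set) \<Rightarrow> nat \<Rightarrow> nat \<Rightarrow> nat \<Rightarrow> 'a set" where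
  "Cpart C l i j = (if i = j then C i - \<Union>{C k | k. k < l \<and> k \<noteq> i} else C i \<inter> C j)"

text \<open>Vertices of the compressed cliques graph: v_{i,j} is represented by the unordered
  index set {i,j} (so v_{i,i} is {i}).\<close>
definition cc_vertices :: "(nat \<Rightarrow> 'a set) \<Rightarrow> nat \<Rightarrow> nat set set" where
  "cc_vertices C l = {{i, j} | i j. i < l \<and> j < l \<and> Cpart C l i j \<noteq> {}}"

definition cc_edge :: "nat set \<Rightarrow> nat set \<Rightarrow> bool" where
  "cc_edge p q \<longleftrightarrow> p \<noteq> q \<and> p \<inter> q \<noteq> {}"

text \<open>The map phi: a covered vertex v is sent to the index set of cliques containing it,
  i.e. {i,j} if v \<in> C_i \<inter> C_j (i \<noteq> j), and {i} if v lies only in C_i.\<close>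
definition phi :: "(nat \<Rightarrow> 'a set) \<Rightarrow> nat \<Rightarrow> 'a \<Rightarrow> nat set" where
  "phi C l v = {i. i < l \<and> v \<in> C i}"

end

theory Submission
  imports Defs
begin

text \<open>Two vertices of \<open>G\<close> whose images under \<open>\<phi>\<close> coincide or are adjacent in the compressed
  cliques graph share an index \<open>i\<close>, hence both lie in the clique \<open>C\<^sub>i\<close> and are adjacent.\<close>

lemma min_max_clique_covering_clique:
  assumes "min_max_clique_covering V E C l" and "i < l"
  shows "clique V E (C i)"
  using assms unfolding min_max_clique_covering_def clique_covering_def by auto

lemma phi_nonempty:
  assumes "x \<in> (\<Union>i<l. C i)"
  shows "phi C l x \<noteq> {}"
  using assms unfolding phi_def by blast

lemma clique_cc_edge_Int_nonempty:
  assumes "clique W cc_edge K" and "p \<in> K" and "q \<in> K" and "p \<noteq> {}"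
  shows "p \<inter> q \<noteq> {}"
  using assms unfolding clique_def cc_edge_def by (cases "p = q") auto

lemma adjacent_if_phi_Int_nonempty:
  assumes "\<forall>i<l. clique V E (C i)"
    and "phi C l x \<inter> phi C l y \<noteq> {}" and "x \<noteq> y"
  shows "E x y"
proof -
  from assms(2) obtain i where "i < l" "x \<in> C i" "y \<in> C i"
    unfolding phi_def by blast
  with assms(1,3) show ?thesis unfolding clique_def by blast
qed

theorem mainTheorem20:
  fixes V :: "'a set" and E :: "'a \<Rightarrow> 'a \<Rightarrow> bool"
    and C :: "nat \<Rightarrow> 'a set" and l :: nat and K :: "nat set set"
  assumes "graph V E"
    and "min_max_clique_covering V E C l"
    and "simple_intersection C l"
    and "clique (cc_vertices C l) cc_edge K"
  shows "clique V E {v \<in> (\<Union>i<l. C i). phi C l v \<in> K}"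
proof -
  have cliques: "\<forall>i<l. clique V E (C i)"
    using assms(2) by (simp add: min_max_clique_covering_clique)
  show ?thesis unfolding clique_def
  proof (intro conjI ballI impI)
    show "{v \<in> (\<Union>i<l. C i). phi C l v \<in> K} \<subseteq> V"
      using cliques unfolding clique_def by blast
  next
    fix x y
    assume x: "x \<in> {v \<in> (\<Union>i<l. C i). phi C l v \<in> K}"
      and y: "y \<in> {v \<in> (\<Union>i<l. C i). phi C l v \<in> K}" and "x \<noteq> y"
    have shared_index: "phi C l x \<inter> phi C l y \<noteq> {}"
      using x y by (intro clique_cc_edge_Int_nonempty[OF assms(4)] phi_nonempty) simp_all
    show "E x y" using cliques shared_index \<open>x \<noteq> y\<close> by (rule adjacent_if_phi_Int_nonempty)
  qed
qed

end
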